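(* Let $Y$ be a locally compact metrizable space and let $\Phi\colon\mathbb{R}\curvearrowright Y$ be a continuous action with bounded periods. Then the orbit space $Y/\mathbb{R}$ is metrizable.
   Context: The action has bounded periods if there is $R>0$ such that for every $y\in Y$ the orbit $\Phi_{\mathbb{R}}(y)$ equals $\{\Phi_t(y): t\in[0,R]\}$. $Y/\mathbb{R}$ carries the quotient topology. *)

theory Defs
  imports "HOL-Analysis.Analysis"
begin

definition continuous_real_action :: "'a topology \<Rightarrow> (real \<Rightarrow> 'a \<Rightarrow> 'a) \<Rightarrow> bool" where
  "continuous_real_action X \<Phi> \<longleftrightarrow>
     continuous_map (prod_topology euclideanreal X) X (\<lambda>(t, y). \<Phi> t y) \<and>
     (\<forall>y\<in>topspace X. \<Phi> 0 y = y) \<and>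
     (\<forall>s t. \<forall>y\<in>topspace X. \<Phi> (s + t) y = \<Phi> s (\<Phi> t y))"

definition orbit :: "(real \<Rightarrow> 'a \<Rightarrow> 'a) \<Rightarrow> 'a \<Rightarrow> 'a set" where
  "orbit \<Phi> y = {\<Phi> t y | t. True}"

definition bounded_periods :: "'a topology \<Rightarrow> (real \<Rightarrow> 'a \<Rightarrow> 'a) \<Rightarrow> bool" where
  "bounded_periods X \<Phi> \<longleftrightarrow>
     (\<exists>R>0. \<forall>y\<in>topspace X. orbit \<Phi> y = {\<Phi> t y | t. t \<in> {0..R}})"

text \<open>The orbit space Y/R with the quotient topology of the map y \<mapsto> orbit y:
  its points are the orbits, and a set U of orbits is open iff the union of U
  (the preimage of U under the quotient map) is open in X.\<close>
definition orbit_space :: "'a topology \<Rightarrow> (real \<Rightarrow> 'a \<Rightarrow> 'a) \<Rightarrow> 'a set topology" where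
  "orbit_space X \<Phi> =
     topology (\<lambda>U. U \<subseteq> orbit \<Phi> ` topspace X \<and> openin X {y \<in> topspace X. orbit \<Phi> y \<in> U})"

end

theory Submission
  imports Defs
begin

text \<open>With bounded periods every orbit is the image of the compact interval [0, R] under
  t \<mapsto> \<Phi> t y, hence compact. Orbits are metrized by the Hausdorff distance
  of the bounded metric min 1 d. The tube lemma for [0, R] makes the orbit map continuous for it,
  and since a saturated open set around a compact orbit contains a uniform neighbourhood of that
  orbit, the induced topology on the orbits is exactly the quotient topology.\<close>

lemma openin_orbit_space:
  "openin (orbit_space X \<Phi>) U \<longleftrightarrow>
     U \<subseteq> orbit \<Phi> ` topspace X \<and> openin X {y \<in> topspace X. orbit \<Phi> y \<in> U}"
proof -
  have "istopology (\<lambda>U. U \<subseteq> orbit \<Phi> ` topspace X \<and> openin X {y \<in> topspace X. orbit \<Phi> y \<in> U})"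
    unfolding istopology_def
  proof (rule conjI; intro allI impI)
    fix S T
    assume "S \<subseteq> orbit \<Phi> ` topspace X \<and> openin X {y \<in> topspace X. orbit \<Phi> y \<in> S}"
      and "T \<subseteq> orbit \<Phi> ` topspace X \<and> openin X {y \<in> topspace X. orbit \<Phi> y \<in> T}"
    moreover have "{y \<in> topspace X. orbit \<Phi> y \<in> S \<inter> T} =
        {y \<in> topspace X. orbit \<Phi> y \<in> S} \<inter> {y \<in> topspace X. orbit \<Phi> y \<in> T}"
      by auto
    ultimately show "S \<inter> T \<subseteq> orbit \<Phi> ` topspace X \<and> openin X {y \<in> topspace X. orbit \<Phi> y \<in> S \<inter> T}"
      by auto
  next
    fix K
    assume "\<forall>S\<in>K. S \<subseteq> orbit \<Phi> ` topspace X \<and> openin X {y \<in> topspace X. orbit \<Phi> y \<in> S}"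
    moreover have "{y \<in> topspace X. orbit \<Phi> y \<in> \<Union>K} = (\<Union>S\<in>K. {y \<in> topspace X. orbit \<Phi> y \<in> S})"
      by auto
    ultimately show "\<Union>K \<subseteq> orbit \<Phi> ` topspace X \<and> openin X {y \<in> topspace X. orbit \<Phi> y \<in> \<Union>K}"
      by auto
  qed
  then show ?thesis
    unfolding orbit_space_def by simp
qed

lemma orbit_eq_if_mem_orbit:
  assumes "continuous_real_action X \<Phi>" "y \<in> topspace X" "z \<in> orbit \<Phi> y"
  shows "orbit \<Phi> z = orbit \<Phi> y"
proof -
  obtain s where z: "z = \<Phi> s y"
    using assms(3) unfolding orbit_def by auto
  have "\<Phi> t z = \<Phi> (t + s) y" for t
    using assms(1,2) unfolding z continuous_real_action_def by simp
  then show ?thesis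
    unfolding orbit_def by (metis diff_add_cancel)
qed

lemma mem_orbit_self:
  "continuous_real_action X \<Phi> \<Longrightarrow> y \<in> topspace X \<Longrightarrow> y \<in> orbit \<Phi> y"
  unfolding continuous_real_action_def orbit_def by (metis (mono_tags, lifting) mem_Collect_eq)

lemma continuous_map_slice:
  assumes "continuous_map (prod_topology T Y) Z (\<lambda>(t, y). F t y)" "y \<in> topspace Y"
  shows "continuous_map T Z (\<lambda>t. F t y)"
proof -
  have "continuous_map T (prod_topology T Y) (\<lambda>t. (t, y))"
    using assms(2) by (simp add: continuous_map_pairwise o_def)
  from continuous_map_compose[OF this assms(1)] show ?thesis
    by (simp add: o_def)
qed

context Metric_space
begin

definition trunc_infdist :: "'a \<Rightarrow> 'a set \<Rightarrow> real" where
  "trunc_infdist z A = (INF a\<in>A. min 1 (d z a))"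

text \<open>The Hausdorff distance for the bounded metric min 1 d, written as the sup-distance of
  the distance functions to A and B; the guard only makes it nonnegative and symmetric
  everywhere, as the locale Metric_space demands.\<close>
definition trunc_hausdist :: "'a set \<Rightarrow> 'a set \<Rightarrow> real" where
  "trunc_hausdist A B =
     (if A \<noteq> {} \<and> B \<noteq> {} \<and> A \<subseteq> M \<and> B \<subseteq> M
      then SUP z\<in>M. \<bar>trunc_infdist z A - trunc_infdist z B\<bar> else 0)"

abbreviation trunc_hausdist_topology :: "'a set topology" where
  "trunc_hausdist_topology \<equiv>
     Metric_space.mtopology {A. closedin mtopology A \<and> A \<noteq> {}} trunc_hausdist"

lemma trunc_infdist_nonneg: "A \<noteq> {} \<Longrightarrow> 0 \<le> trunc_infdist z A"
  unfolding trunc_infdist_def by (intro cINF_greatest) auto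

lemma trunc_infdist_le: "a \<in> A \<Longrightarrow> trunc_infdist z A \<le> min 1 (d z a)"
  unfolding trunc_infdist_def by (intro cINF_lower) (auto intro: bdd_belowI2[where m=0])

lemma trunc_infdist_le_one: "A \<noteq> {} \<Longrightarrow> trunc_infdist z A \<le> 1"
  using trunc_infdist_le by (meson ex_in_conv min.cobounded1 order_trans)

lemma trunc_infdist_self: "z \<in> M \<Longrightarrow> z \<in> A \<Longrightarrow> trunc_infdist z A = 0"
  using trunc_infdist_le[of z A z] trunc_infdist_nonneg[of A z] by auto

lemma trunc_infdist_less_imp:
  assumes "trunc_infdist z A < r" "r \<le> 1" "A \<noteq> {}"
  shows "\<exists>a\<in>A. d z a < r"
proof -
  obtain a where a: "a \<in> A" "min 1 (d z a) < r"
    using cInf_lessD[of "(\<lambda>a. min 1 (d z a)) ` A" r] assms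
    unfolding trunc_infdist_def by auto
  then have "d z a < r"
    using assms(2) by (auto simp: min_def split: if_splits)
  with a show ?thesis by blast
qed

lemma trunc_infdist_eq_0_iff:
  assumes "closedin mtopology A" "A \<noteq> {}" "z \<in> M"
  shows "trunc_infdist z A = 0 \<longleftrightarrow> z \<in> A"
proof
  assume zero: "trunc_infdist z A = 0"
  show "z \<in> A"
  proof (rule ccontr)
    assume "z \<notin> A"
    moreover have "openin mtopology (M - A)"
      using assms(1) by (simp add: closedin_def)
    ultimately obtain \<epsilon> where "\<epsilon> > 0" "mball z \<epsilon> \<subseteq> M - A"
      using assms(3) openin_mtopology by (metis Diff_iff)
    moreover obtain a where a: "a \<in> A" "d z a < min 1 \<epsilon>"
      using trunc_infdist_less_imp[of z A "min 1 \<epsilon>"] zero \<open>\<epsilon> > 0\<close> assms(2) by auto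
    moreover have "a \<in> M"
      using closedin_subset[OF assms(1)] a(1) by auto
    ultimately have "a \<in> mball z \<epsilon> - (M - A)"
      using assms(3) by simp
    then show False
      using \<open>mball z \<epsilon> \<subseteq> M - A\<close> by blast
  qed
qed (use assms trunc_infdist_self in auto)

lemma trunc_infdist_image_le:
  assumes "T \<noteq> {}" "z \<in> M"
    and "\<And>t. t \<in> T \<Longrightarrow> f t \<in> M \<and> h t \<in> M \<and> d (f t) (h t) \<le> c"
  shows "trunc_infdist z (h ` T) \<le> trunc_infdist z (f ` T) + c"
proof -
  have "trunc_infdist z (h ` T) - c \<le> trunc_infdist z (f ` T)"
    unfolding trunc_infdist_def image_image
  proof (intro cINF_greatest)
    fix t assume t: "t \<in> T"
    have "(INF s\<in>T. min 1 (d z (h s))) \<le> min 1 (d z (h t))"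
      using trunc_infdist_le[of "h t" "h ` T" z] t unfolding trunc_infdist_def image_image by simp
    also have "\<dots> \<le> min 1 (d z (f t)) + d (f t) (h t)"
      using triangle[of z "f t" "h t"] nonneg[of "f t" "h t"] assms(2) assms(3)[OF t]
      by (smt (verit))
    finally show "(INF s\<in>T. min 1 (d z (h s))) - c \<le> min 1 (d z (f t))"
      using assms(3)[OF t] by linarith
  qed (use assms(1) in simp)
  then show ?thesis by simp
qed

lemma trunc_infdist_diff_le_hausdist:
  assumes "A \<noteq> {}" "B \<noteq> {}" "A \<subseteq> M" "B \<subseteq> M" "z \<in> M"
  shows "\<bar>trunc_infdist z A - trunc_infdist z B\<bar> \<le> trunc_hausdist A B"
proof -
  have "\<bar>trunc_infdist z A - trunc_infdist z B\<bar> \<le> 1" for z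
    using trunc_infdist_nonneg[OF assms(1), of z] trunc_infdist_nonneg[OF assms(2), of z]
      trunc_infdist_le_one[OF assms(1), of z] trunc_infdist_le_one[OF assms(2), of z]
    by (auto simp: abs_le_iff)
  then have "bdd_above ((\<lambda>z. \<bar>trunc_infdist z A - trunc_infdist z B\<bar>) ` M)"
    by (intro bdd_aboveI2)
  then show ?thesis
    unfolding trunc_hausdist_def using assms by (auto intro: cSUP_upper)
qed

lemma trunc_hausdist_le:
  assumes "A \<noteq> {}" "B \<noteq> {}" "A \<subseteq> M" "B \<subseteq> M"
    and "\<And>z. z \<in> M \<Longrightarrow> \<bar>trunc_infdist z A - trunc_infdist z B\<bar> \<le> c"
  shows "trunc_hausdist A B \<le> c"
  unfolding trunc_hausdist_def using assms by (auto intro: cSUP_least)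

lemma trunc_hausdist_image_le:
  assumes "T \<noteq> {}" "\<And>t. t \<in> T \<Longrightarrow> f t \<in> M \<and> h t \<in> M \<and> d (f t) (h t) \<le> c"
  shows "trunc_hausdist (f ` T) (h ` T) \<le> c"
proof (rule trunc_hausdist_le)
  fix z assume z: "z \<in> M"
  have "trunc_infdist z (h ` T) \<le> trunc_infdist z (f ` T) + c"
    using assms z by (intro trunc_infdist_image_le)
  moreover have "trunc_infdist z (f ` T) \<le> trunc_infdist z (h ` T) + c"
    using assms z commute by (intro trunc_infdist_image_le) auto
  ultimately show "\<bar>trunc_infdist z (f ` T) - trunc_infdist z (h ` T)\<bar> \<le> c"
    by (simp add: abs_le_iff)
qed (use assms in auto)

lemma trunc_hausdist_nonneg: "0 \<le> trunc_hausdist A B"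
proof (cases "A \<noteq> {} \<and> B \<noteq> {} \<and> A \<subseteq> M \<and> B \<subseteq> M")
  case True
  then obtain z where "z \<in> M" by blast
  with True show ?thesis
    using trunc_infdist_diff_le_hausdist[of A B z] by linarith
qed (auto simp: trunc_hausdist_def)

lemma Metric_space_trunc_hausdist:
  "Metric_space {A. closedin mtopology A \<and> A \<noteq> {}} trunc_hausdist"
proof
  fix A B
  show "0 \<le> trunc_hausdist A B"
    by (rule trunc_hausdist_nonneg)
  show "trunc_hausdist A B = trunc_hausdist B A"
    unfolding trunc_hausdist_def by (auto simp: abs_minus_commute)
next
  fix A B
  assume A: "A \<in> {A. closedin mtopology A \<and> A \<noteq> {}}" and B: "B \<in> {A. closedin mtopology A \<and> A \<noteq> {}}"
  then have sub: "A \<subseteq> M" "B \<subseteq> M"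
    by (simp_all add: closedin_subset[of mtopology, simplified])
  show "trunc_hausdist A B = 0 \<longleftrightarrow> A = B"
  proof
    assume "trunc_hausdist A B = 0"
    then have "trunc_infdist z A = trunc_infdist z B" if "z \<in> M" for z
      using trunc_infdist_diff_le_hausdist[of A B z] A B sub that by auto
    then have "z \<in> A \<longleftrightarrow> z \<in> B" if "z \<in> M" for z
      using trunc_infdist_eq_0_iff[of A z] trunc_infdist_eq_0_iff[of B z] A B that by simp
    with sub show "A = B"
      by blast
  next
    assume "A = B"
    have "trunc_hausdist A A \<le> 0"
      using A sub by (intro trunc_hausdist_le) auto
    with \<open>A = B\<close> show "trunc_hausdist A B = 0"
      using trunc_hausdist_nonneg[of A A] by simp
  qed
next
  fix A B C
  assume "A \<in> {A. closedin mtopology A \<and> A \<noteq> {}}" "B \<in> {A. closedin mtopology A \<and> A \<noteq> {}}"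
    "C \<in> {A. closedin mtopology A \<and> A \<noteq> {}}"
  then have ne: "A \<noteq> {}" "B \<noteq> {}" "C \<noteq> {}" and sub: "A \<subseteq> M" "B \<subseteq> M" "C \<subseteq> M"
    by (simp_all add: closedin_subset[of mtopology, simplified])
  show "trunc_hausdist A C \<le> trunc_hausdist A B + trunc_hausdist B C"
  proof (rule trunc_hausdist_le[OF ne(1,3) sub(1,3)])
    fix z assume z: "z \<in> M"
    have "\<bar>trunc_infdist z A - trunc_infdist z C\<bar> \<le>
        \<bar>trunc_infdist z A - trunc_infdist z B\<bar> + \<bar>trunc_infdist z B - trunc_infdist z C\<bar>"
      using abs_triangle_ineq[of "trunc_infdist z A - trunc_infdist z B"
          "trunc_infdist z B - trunc_infdist z C"] by simp
    then show "\<bar>trunc_infdist z A - trunc_infdist z C\<bar> \<le> trunc_hausdist A B + trunc_hausdist B C"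
      using trunc_infdist_diff_le_hausdist[OF ne(1,2) sub(1,2) z]
        trunc_infdist_diff_le_hausdist[OF ne(2,3) sub(2,3) z] by linarith
  qed
qed

lemma trunc_hausdist_small_imp_subset_open:
  assumes "compactin mtopology K" "K \<noteq> {}" "openin mtopology W" "K \<subseteq> W"
  obtains \<epsilon> where "\<epsilon> > 0"
    "\<And>B. B \<noteq> {} \<Longrightarrow> B \<subseteq> M \<Longrightarrow> trunc_hausdist K B < \<epsilon> \<Longrightarrow> B \<subseteq> W"
proof -
  obtain \<epsilon> where \<epsilon>: "\<epsilon> > 0" "\<And>a. a \<in> K \<Longrightarrow> mball a \<epsilon> \<subseteq> W"
    using lebesgue_number[of K "{W}"] assms by auto
  have KM: "K \<subseteq> M"
    using compactin_subset_topspace[OF assms(1)] by simp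
  have "B \<subseteq> W" if B: "B \<noteq> {}" "B \<subseteq> M" "trunc_hausdist K B < min 1 \<epsilon>" for B
  proof
    fix y assume "y \<in> B"
    with B have y: "y \<in> M" "trunc_infdist y B = 0"
      using trunc_infdist_self by auto
    have "trunc_infdist y K \<le> trunc_hausdist K B"
      using trunc_infdist_diff_le_hausdist[OF assms(2) B(1) KM B(2) y(1)] y(2) by simp
    then obtain a where a: "a \<in> K" "d y a < min 1 \<epsilon>"
      using trunc_infdist_less_imp[of y K "min 1 \<epsilon>"] assms(2) B(3) by auto
    then have "y \<in> mball a \<epsilon>"
      using KM y(1) commute by auto
    then show "y \<in> W"
      using \<epsilon>(2)[OF a(1)] by blast
  qed
  then show ?thesis
    using that[of "min 1 \<epsilon>"] \<epsilon>(1) by simp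
qed

lemma continuous_map_image_trunc_hausdist:
  assumes K: "compactin T K" "K \<noteq> {}"
    and F: "continuous_map (prod_topology T Y) mtopology (\<lambda>(t, y). F t y)"
  shows "continuous_map Y trunc_hausdist_topology (\<lambda>y. (\<lambda>t. F t y) ` K)"
proof -
  interpret H: Metric_space "{A. closedin mtopology A \<and> A \<noteq> {}}" trunc_hausdist
    by (rule Metric_space_trunc_hausdist)
  have slice_compact: "compactin mtopology ((\<lambda>t. F t y) ` K)" if "y \<in> topspace Y" for y
    using image_compactin[OF K(1) continuous_map_slice[OF F that]] .
  then have slice_closed: "closedin mtopology ((\<lambda>t. F t y) ` K)" if "y \<in> topspace Y" for y
    using that compactin_imp_closedin Hausdorff_space_mtopology by blast
  have FM: "F t y \<in> M" if "t \<in> topspace T" "y \<in> topspace Y" for t y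
    using continuous_map_image_subset_topspace[OF F] that by force
  show ?thesis
    unfolding H.continuous_map_to_metric
  proof (intro ballI allI impI)
    fix y0 and \<epsilon> :: real
    assume y0: "y0 \<in> topspace Y" and "\<epsilon> > 0"
    let ?S = "{p \<in> topspace (prod_topology T Y). d (F (fst p) (snd p)) (F (fst p) y0) < \<epsilon>/2}"
    have "continuous_map (prod_topology T Y) mtopology (\<lambda>p. F (fst p) y0)"
      using continuous_map_compose[OF continuous_map_fst continuous_map_slice[OF F y0]]
      by (simp add: o_def)
    then have "continuous_map (prod_topology T Y) euclideanreal
        (\<lambda>p. mdist (metric (M, d)) (F (fst p) (snd p)) (F (fst p) y0))"
      using F by (intro continuous_map_mdist) (auto simp: case_prod_beta')
    from openin_continuous_map_preimage[OF this, of "{..<\<epsilon>/2}"]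
    have S_open: "openin (prod_topology T Y) ?S"
      by simp
    have "K \<times> {y0} \<subseteq> ?S"
    proof
      fix p assume "p \<in> K \<times> {y0}"
      then obtain t where "t \<in> topspace T" "p = (t, y0)"
        using compactin_subset_topspace[OF K(1)] by blast
      then show "p \<in> ?S"
        using y0 FM[of t y0] \<open>\<epsilon> > 0\<close> by simp
    qed
    then obtain U V where UV: "openin Y V" "y0 \<in> V" "K \<subseteq> U" "U \<times> V \<subseteq> ?S"
      using tube_lemma_left[OF S_open K(1) y0] by blast
    have "(\<lambda>t. F t y) ` K \<in> H.mball ((\<lambda>t. F t y0) ` K) \<epsilon>" if "y \<in> V" for y
    proof -
      have "y \<in> topspace Y"
        using UV(1) openin_subset that by blast
      have "d (F t y0) (F t y) \<le> \<epsilon>/2" if "t \<in> K" for t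
      proof -
        have "(t, y) \<in> ?S"
          using UV(3,4) \<open>y \<in> V\<close> that by blast
        then show ?thesis
          by (simp add: commute)
      qed
      then have "trunc_hausdist ((\<lambda>t. F t y0) ` K) ((\<lambda>t. F t y) ` K) \<le> \<epsilon>/2"
        using K(2) FM compactin_subset_topspace[OF K(1)] y0 \<open>y \<in> topspace Y\<close>
        by (intro trunc_hausdist_image_le) auto
      then show ?thesis
        using \<open>\<epsilon> > 0\<close> K(2) slice_closed[OF y0] slice_closed[OF \<open>y \<in> topspace Y\<close>] by simp
    qed
    then show "\<exists>V. openin Y V \<and> y0 \<in> V \<and>
        (\<forall>y\<in>V. (\<lambda>t. F t y) ` K \<in> H.mball ((\<lambda>t. F t y0) ` K) \<epsilon>)"
      using UV(1,2) by blast
  qed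
qed

lemma orbit_space_eq_subtopology_trunc_hausdist:
  assumes action: "continuous_real_action mtopology \<Phi>" and "R \<ge> 0"
    and periods: "\<And>y. y \<in> M \<Longrightarrow> orbit \<Phi> y = (\<lambda>t. \<Phi> t y) ` {0..R}"
  shows "orbit_space mtopology \<Phi> = subtopology trunc_hausdist_topology (orbit \<Phi> ` M)"
proof -
  interpret H: Metric_space "{A. closedin mtopology A \<and> A \<noteq> {}}" trunc_hausdist
    by (rule Metric_space_trunc_hausdist)
  have cont: "continuous_map (prod_topology euclideanreal mtopology) mtopology (\<lambda>(t, y). \<Phi> t y)"
    using action unfolding continuous_real_action_def by blast
  have interval: "compactin euclideanreal {0..R}" "{0..R} \<noteq> {}"
    using \<open>R \<ge> 0\<close> by (auto simp: compactin_euclidean_iff)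
  have orbit_compact: "compactin mtopology (orbit \<Phi> y)" if "y \<in> M" for y
    using image_compactin[OF interval(1) continuous_map_slice[OF cont]] periods that by simp
  have "continuous_map mtopology trunc_hausdist_topology (\<lambda>y. (\<lambda>t. \<Phi> t y) ` {0..R})"
    using continuous_map_image_trunc_hausdist[OF interval cont] .
  then have orbit_cont: "continuous_map mtopology trunc_hausdist_topology (orbit \<Phi>)"
    by (rule continuous_map_eq) (simp add: periods)
  show ?thesis
  proof (rule topology_eq[THEN iffD2], intro allI iffI)
    fix U
    assume "openin (orbit_space mtopology \<Phi>) U"
    then have U: "U \<subseteq> orbit \<Phi> ` M" and W: "openin mtopology {y \<in> M. orbit \<Phi> y \<in> U}"
      by (auto simp: openin_orbit_space)
    show "openin (subtopology trunc_hausdist_topology (orbit \<Phi> ` M)) U"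
    proof (subst openin_subopen, intro ballI)
      fix Q assume "Q \<in> U"
      then obtain x where x: "x \<in> M" "Q = orbit \<Phi> x"
        using U by auto
      have "Q \<subseteq> {y \<in> M. orbit \<Phi> y \<in> U}"
      proof
        fix z assume "z \<in> Q"
        have "z \<in> M"
          using compactin_subset_topspace[OF orbit_compact[OF x(1)]] x(2) \<open>z \<in> Q\<close> by auto
        moreover have "orbit \<Phi> z = Q"
          using orbit_eq_if_mem_orbit[OF action, of x z] x \<open>z \<in> Q\<close> by simp
        ultimately show "z \<in> {y \<in> M. orbit \<Phi> y \<in> U}"
          using \<open>Q \<in> U\<close> by simp
      qed
      moreover have Q: "compactin mtopology Q" "Q \<noteq> {}"
        using orbit_compact mem_orbit_self[OF action] x by auto
      ultimately obtain \<epsilon> where "\<epsilon> > 0" and near: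
        "\<And>B. B \<noteq> {} \<Longrightarrow> B \<subseteq> M \<Longrightarrow> trunc_hausdist Q B < \<epsilon> \<Longrightarrow> B \<subseteq> {y \<in> M. orbit \<Phi> y \<in> U}"
        using trunc_hausdist_small_imp_subset_open[OF Q W] by blast
      show "\<exists>T. openin (subtopology trunc_hausdist_topology (orbit \<Phi> ` M)) T \<and> Q \<in> T \<and> T \<subseteq> U"
      proof (intro exI conjI)
        show "openin (subtopology trunc_hausdist_topology (orbit \<Phi> ` M)) (orbit \<Phi> ` M \<inter> H.mball Q \<epsilon>)"
          by (simp add: openin_subtopology_Int2)
        show "Q \<in> orbit \<Phi> ` M \<inter> H.mball Q \<epsilon>"
          using Q compactin_imp_closedin[OF Hausdorff_space_mtopology] x \<open>\<epsilon> > 0\<close> by auto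
        show "orbit \<Phi> ` M \<inter> H.mball Q \<epsilon> \<subseteq> U"
        proof clarify
          fix y assume "y \<in> M" "orbit \<Phi> y \<in> H.mball Q \<epsilon>"
          then have "closedin mtopology (orbit \<Phi> y)" "trunc_hausdist Q (orbit \<Phi> y) < \<epsilon>"
            by auto
          then have "orbit \<Phi> y \<subseteq> {y \<in> M. orbit \<Phi> y \<in> U}"
            using near mem_orbit_self[OF action] \<open>y \<in> M\<close> closedin_subset[of mtopology "orbit \<Phi> y"]
            by (metis empty_iff topspace_mtopology)
          then show "orbit \<Phi> y \<in> U"
            using mem_orbit_self[OF action] \<open>y \<in> M\<close> by auto
        qed
      qed
    qed
  next
    fix U
    assume U: "openin (subtopology trunc_hausdist_topology (orbit \<Phi> ` M)) U"
    have "continuous_map mtopology (subtopology trunc_hausdist_topology (orbit \<Phi> ` M)) (orbit \<Phi>)"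
      using orbit_cont by (auto simp: continuous_map_in_subtopology)
    from openin_continuous_map_preimage[OF this U]
    have "openin mtopology {y \<in> M. orbit \<Phi> y \<in> U}"
      by simp
    moreover have "U \<subseteq> orbit \<Phi> ` M"
      using openin_subset[OF U] by auto
    ultimately show "openin (orbit_space mtopology \<Phi>) U"
      by (simp add: openin_orbit_space)
  qed
qed

end

theorem lemma5p2:
  fixes X :: "'a topology" and \<Phi> :: "real \<Rightarrow> 'a \<Rightarrow> 'a"
  assumes "locally_compact_space X"
    and "metrizable_space X"
    and "continuous_real_action X \<Phi>"
    and "bounded_periods X \<Phi>"
  shows "metrizable_space (orbit_space X \<Phi>)"
proof -
  obtain M d where "Metric_space M d" and X: "X = Metric_space.mtopology M d"
    using assms(2) metrizable_space_def by blast
  interpret Metric_space M d by fact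
  obtain R where "R > 0" and periods: "\<forall>y\<in>M. orbit \<Phi> y = {\<Phi> t y | t. t \<in> {0..R}}"
    using assms(4) unfolding bounded_periods_def X by auto
  have "orbit_space X \<Phi> = subtopology trunc_hausdist_topology (orbit \<Phi> ` M)"
    unfolding X using assms(3) X \<open>R > 0\<close> periods
    by (intro orbit_space_eq_subtopology_trunc_hausdist[of \<Phi> R]) (auto simp: image_def)
  then show ?thesis
    using metrizable_space_subtopology
      Metric_space.metrizable_space_mtopology[OF Metric_space_trunc_hausdist] by metis
qed

end
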